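(* Let $n$ be an integer with $n=u^4+v^4=r^4+s^4$ for integers $u,v,r,s$ satisfying $\gcd(u,v,r,s)=1$. If $p$ is an odd prime with $p\mid n$, then $p\equiv 1\pmod 8$. *)

theory Defs
  imports "HOL-Number_Theory.Number_Theory"
begin

end

theory Submission
  imports Defs
begin

text \<open>If \<open>p\<close> divides \<open>x\<^sup>4 + y\<^sup>4\<close> but not \<open>x\<close>, then \<open>t \<equiv> y/x\<close> satisfies \<open>t\<^sup>4 \<equiv> -1 (mod p)\<close>, so
  \<open>t\<close> has multiplicative order exactly 8 modulo \<open>p\<close>, and Fermat's little theorem gives
  \<open>8 dvd p - 1\<close>. Since \<open>gcd(u,v,r,s) = 1\<close>, an odd prime dividing \<open>n\<close> cannot divide both
  \<open>u\<close> and \<open>r\<close>: it would then divide \<open>v\<^sup>4 = n - u\<^sup>4\<close> and \<open>s\<^sup>4 = n - r\<^sup>4\<close> as well.\<close>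

lemma ord_eq_pow_two_if_dvd_pow_two_pow_plus_one:
  fixes p t k :: nat
  assumes "prime p" "odd p" "p dvd t ^ 2 ^ k + 1"
  shows "ord p t = 2 ^ Suc k"
proof -
  have minus_one: "[int t ^ 2 ^ k = -1] (mod int p)"
    using assms(3) by (simp add: cong_iff_dvd_diff add.commute flip: int_dvd_int_iff)
  have "int t ^ 2 ^ Suc k = (int t ^ 2 ^ k)\<^sup>2"
    by (metis power_mult power_Suc2)
  also have "[\<dots> = (-1)\<^sup>2] (mod int p)"
    using minus_one by (rule cong_pow)
  finally have "[int t ^ 2 ^ Suc k = int 1] (mod int p)"
    by simp
  then have "[t ^ 2 ^ Suc k = 1] (mod p)"
    by (simp only: cong_int_iff flip: of_nat_power)
  then have "ord p t dvd 2 ^ Suc k"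
    by (simp only: ord_divides)
  then obtain i where "i \<le> Suc k" and ord_eq: "ord p t = 2 ^ i"
    using divides_primepow_nat[OF two_is_prime_nat] by blast
  have "\<not> ord p t dvd 2 ^ k"
  proof
    assume "ord p t dvd 2 ^ k"
    then have "[int t ^ 2 ^ k = int 1] (mod int p)"
      by (simp only: ord_divides cong_int_iff flip: of_nat_power)
    with minus_one have "[1 = -1] (mod int p)"
      by (metis cong_sym cong_trans of_nat_1)
    then have "p dvd 2"
      by (simp add: cong_iff_dvd_diff flip: int_dvd_int_iff)
    with assms(1,2) show False
      by (metis dvd_imp_le even_numeral le_antisym prime_ge_2_nat zero_less_numeral)
  qed
  with \<open>i \<le> Suc k\<close> have "i = Suc k"
    unfolding ord_eq by (metis le_Suc_eq le_imp_power_dvd)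
  with ord_eq show ?thesis by simp
qed

lemma prime_dvd_pow_two_pow_plus_one_cong:
  fixes p t k :: nat
  assumes "prime p" "odd p" "p dvd t ^ 2 ^ k + 1"
  shows "[p = 1] (mod 2 ^ Suc k)"
proof -
  have "\<not> p dvd t"
  proof
    assume "p dvd t"
    then have "p dvd t ^ 2 ^ k"
      using dvd_power dvd_trans by (metis pos2 zero_less_power)
    with assms(3) have "p dvd 1"
      by (metis dvd_add_right_iff)
    with assms(1) show False
      by simp
  qed
  with assms(1) have "[t ^ (p - 1) = 1] (mod p)"
    by (rule fermat_theorem)
  then have "2 ^ Suc k dvd p - 1"
    using ord_eq_pow_two_if_dvd_pow_two_pow_plus_one[OF assms] ord_divides by metis
  moreover have "p \<ge> 1"
    using assms(1) prime_ge_1_nat by blast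
  ultimately show ?thesis
    by (simp add: cong_altdef_nat cong_sym_eq)
qed

lemma prime_dvd_sum_fourth_powers_cong:
  fixes x y :: int and p :: nat
  assumes "prime p" "odd p" "int p dvd x ^ 4 + y ^ 4" "\<not> int p dvd x"
  shows "[p = 1] (mod 8)"
proof -
  have "coprime x (int p)"
    using assms(1,4) by (metis coprime_commute prime_imp_coprime prime_nat_int_transfer)
  then obtain w where w: "[x * w = 1] (mod int p)"
    using cong_solve_coprime_int by blast
  define t where "t = nat ((y * w) mod int p)"
  have t: "[int t = y * w] (mod int p)"
    using assms(1) by (simp add: t_def cong_def prime_gt_0_nat)
  have "[int t ^ 4 + 1 = (y * w) ^ 4 + (x * w) ^ 4] (mod int p)"
    using t cong_pow[OF w, of 4] by (intro cong_add cong_pow) (auto simp: cong_sym)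
  also have "(y * w) ^ 4 + (x * w) ^ 4 = w ^ 4 * (x ^ 4 + y ^ 4)"
    by (simp add: algebra_simps power_mult_distrib)
  also have "[\<dots> = 0] (mod int p)"
    using assms(3) by (simp add: cong_0_iff)
  finally have "p dvd t ^ 2 ^ 2 + 1"
    by (simp add: cong_0_iff add.commute flip: int_dvd_int_iff)
  from prime_dvd_pow_two_pow_plus_one_cong[OF assms(1,2) this] show ?thesis
    by simp
qed

theorem proposition3p1:
  fixes n u v r s :: int and p :: nat
  assumes "n = u ^ 4 + v ^ 4"
    and "n = r ^ 4 + s ^ 4"
    and "gcd (gcd u v) (gcd r s) = 1"
    and "prime p" and "odd p"
    and "int p dvd n"
  shows "[p = 1] (mod 8)"
proof -
  have prime: "prime (int p)"
    using assms(4) by simp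
  have "\<not> (int p dvd u \<and> int p dvd r)"
  proof
    assume "int p dvd u \<and> int p dvd r"
    moreover from this have "int p dvd u ^ 4" "int p dvd r ^ 4"
      using dvd_power dvd_trans by (metis zero_less_numeral)+
    then have "int p dvd v ^ 4" "int p dvd s ^ 4"
      using assms(1,2,6) by (metis dvd_add_right_iff)+
    then have "int p dvd v" "int p dvd s"
      using prime prime_dvd_power by blast+
    ultimately have "int p dvd gcd (gcd u v) (gcd r s)"
      by simp
    with assms(3) prime show False
      by (simp add: prime_int_iff)
  qed
  then show ?thesis
    using prime_dvd_sum_fourth_powers_cong[OF assms(4,5)] assms(1,2,6) by metis
qed

end
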